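(* Let $E\subseteq\mathrm{Lim}(\omega_1)$ be stationary and let $S=(x_\gamma)_{\gamma\in E}$ be a $\clubsuit(E)$-sequence. Let $\kappa$ be any cardinal and $P=\Pi^*_{\kappa}\mathrm{Fn}(\omega,2)$. Then $P$ forces that $S$ is a $\clubsuit(E)$-sequence.
   Context: $\mathrm{Lim}(\omega_1)$ is the set of countable limit ordinals. A $\clubsuit(E)$-sequence is $(x_\gamma)_{\gamma\in E}$ with each $x_\gamma$ a cofinal subset of $\gamma$ of order type $\omega$ such that for every $y\in[\omega_1]^{\aleph_1}$ there is $\gamma\in E$ with $x_\gamma\subseteq y$. $\mathrm{Fn}(\omega,2)$ is the set of finite partial functions from $\omega$ to $2$ ordered by reverse inclusion. $\Pi^*_{\kappa}\mathrm{Fn}(\omega,2)$ is the set of functions $p:\kappa\to\mathrm{Fn}(\omega,2)$ with $\mathrm{supp}(p)=\{i:p(i)\neq\emptyset\}$ countable, ordered by $p\leq q$ iff $p(i)\supseteq q(i)$ for all $i<\kappa$ and $\{i : p(i)\supsetneq q(i)\supsetneq\emptyset\}$ is finite. *)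

theory Defs
  imports "HOL-Library.Countable_Set"
begin

(* omega_1 is modelled by a wellorder type 'w all of whose proper initial
   segments are countable while the whole type is uncountable; this
   characterises omega_1 up to order isomorphism. *)
definition is_omega1 :: "'w::wellorder itself \<Rightarrow> bool" where
  "is_omega1 _ \<longleftrightarrow> uncountable (UNIV :: 'w set) \<and> (\<forall>x::'w. countable {..<x})"

definition is_limit :: "'w::wellorder \<Rightarrow> bool" where
  "is_limit \<gamma> \<longleftrightarrow> (\<exists>\<beta>. \<beta> < \<gamma>) \<and> (\<forall>\<beta><\<gamma>. \<exists>\<delta>. \<beta> < \<delta> \<and> \<delta> < \<gamma>)"

definition club :: "'w::wellorder set \<Rightarrow> bool" where
  "club C \<longleftrightarrow> (\<forall>\<beta>. \<exists>\<delta>\<in>C. \<beta> < \<delta>) \<and>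
     (\<forall>\<gamma>. is_limit \<gamma> \<and> (\<forall>\<beta><\<gamma>. \<exists>\<delta>\<in>C. \<beta> < \<delta> \<and> \<delta> < \<gamma>) \<longrightarrow> \<gamma> \<in> C)"

definition stationary :: "'w::wellorder set \<Rightarrow> bool" where
  "stationary E \<longleftrightarrow> (\<forall>C. club C \<longrightarrow> E \<inter> C \<noteq> {})"

(* x is a cofinal subset of gamma of order type omega *)
definition ladder :: "'w::wellorder \<Rightarrow> 'w set \<Rightarrow> bool" where
  "ladder \<gamma> x \<longleftrightarrow> x \<subseteq> {..<\<gamma>} \<and> (\<forall>\<beta><\<gamma>. \<exists>\<delta>\<in>x. \<beta> \<le> \<delta>) \<and>
     infinite x \<and> (\<forall>\<beta>\<in>x. finite {\<delta>\<in>x. \<delta> < \<beta>})"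

definition clubsuit_seq :: "'w::wellorder set \<Rightarrow> ('w \<Rightarrow> 'w set) \<Rightarrow> bool" where
  "clubsuit_seq E x \<longleftrightarrow> (\<forall>\<gamma>\<in>E. is_limit \<gamma> \<and> ladder \<gamma> (x \<gamma>)) \<and>
     (\<forall>y. uncountable y \<longrightarrow> (\<exists>\<gamma>\<in>E. x \<gamma> \<subseteq> y))"

definition Fn :: "(nat \<rightharpoonup> bool) set" where
  "Fn = {f. finite (dom f)}"

(* Pi^*_kappa Fn(omega,2), kappa represented by an index set K *)
definition PiStar :: "'k set \<Rightarrow> ('k \<Rightarrow> (nat \<rightharpoonup> bool)) set" where
  "PiStar K = {p. (\<forall>i. p i \<in> Fn) \<and> (\<forall>i. i \<notin> K \<longrightarrow> p i = Map.empty)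
                  \<and> countable {i. p i \<noteq> Map.empty}}"

definition pleq :: "('k \<Rightarrow> (nat \<rightharpoonup> bool)) \<Rightarrow> ('k \<Rightarrow> (nat \<rightharpoonup> bool)) \<Rightarrow> bool" where
  "pleq p q \<longleftrightarrow> (\<forall>i. q i \<subseteq>\<^sub>m p i) \<and>
     finite {i. p i \<noteq> q i \<and> q i \<noteq> Map.empty}"

(* Nice names for subsets of omega_1 (ground model): A : 'w => set of conditions,
   meaning {(alpha-check, a) | a \<in> A alpha}. *)

(* q forces  alpha-check \<in> y-dot,  where A = A alpha (A predense below q) *)
definition forces_mem :: "'c set \<Rightarrow> ('c \<Rightarrow> 'c \<Rightarrow> bool) \<Rightarrow> 'c \<Rightarrow> 'c set \<Rightarrow> bool" where
  "forces_mem P le q A \<longleftrightarrow>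
     (\<forall>r\<in>P. le r q \<longrightarrow> (\<exists>s\<in>P. le s r \<and> (\<exists>a\<in>A. le s a)))"

definition forces_unbounded ::
  "'c set \<Rightarrow> ('c \<Rightarrow> 'c \<Rightarrow> bool) \<Rightarrow> 'c \<Rightarrow> ('w::wellorder \<Rightarrow> 'c set) \<Rightarrow> bool" where
  "forces_unbounded P le p A \<longleftrightarrow>
     (\<forall>\<beta>. \<forall>q\<in>P. le q p \<longrightarrow> (\<exists>r\<in>P. le r q \<and> (\<exists>\<alpha>. \<beta> < \<alpha> \<and> (\<exists>a\<in>A \<alpha>. le r a))))"

definition forces_clubsuit_guess ::
  "'c set \<Rightarrow> ('c \<Rightarrow> 'c \<Rightarrow> bool) \<Rightarrow> 'w::wellorder set \<Rightarrow> ('w \<Rightarrow> 'w set) \<Rightarrow> bool" where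
  "forces_clubsuit_guess P le E x \<longleftrightarrow>
     (\<forall>p\<in>P. \<forall>A. (\<forall>\<alpha>. A \<alpha> \<subseteq> P) \<and> forces_unbounded P le p A \<longrightarrow>
        (\<exists>q\<in>P. le q p \<and> (\<exists>\<gamma>\<in>E. \<forall>n\<in>x \<gamma>. forces_mem P le q (A n))))"

end

theory Submission
  imports Defs
begin

(*
  Fix p and a name A for y such that p forces y to be unbounded. By recursion on xi < omega_1
  choose conditions stage xi below base xi, the amalgam of p with all earlier stages (on each
  coordinate take p if it is nonempty there, otherwise the first earlier stage nonempty there),
  such that stage xi forces some alpha xi > xi into y. Since stage xi <= base xi, stage xi
  properly extends base xi on only finitely many nonempty coordinates; this finite part is the
  stem of xi. At a closure point delta of the construction, a limit, the finite support of the
  stem of delta already lies in the support of some base eta with eta < delta, while only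
  countably many stems have support inside a given countable set; so some stem tau is shared by
  uncountably many xi. Their ordinals alpha xi form an uncountable set, which therefore contains
  some x gamma. Overwriting base gamma by tau yields a condition below p and below every stage xi
  with stem tau and xi < gamma, hence it forces x gamma into y.
*)

abbreviation supp :: "('k \<Rightarrow> 'a \<rightharpoonup> 'b) \<Rightarrow> 'k set" where
  "supp q \<equiv> {i. q i \<noteq> Map.empty}"

lemma countable_lessThan_omega1:
  assumes "is_omega1 TYPE('w::wellorder)"
  shows "countable {..<x::'w}"
  using assms unfolding is_omega1_def by simp

lemma countable_atMost_omega1:
  assumes "is_omega1 TYPE('w::wellorder)"
  shows "countable {..x::'w}"
proof -
  have "{..x} = insert x {..<x}" by auto
  then show ?thesis using countable_lessThan_omega1[OF assms] by simp
qed

lemma countable_bounded_omega1: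
  fixes Y :: "'w::wellorder set"
  assumes "is_omega1 TYPE('w)" "countable Y"
  obtains b where "Y \<subseteq> {..<b}"
proof -
  have "countable (\<Union>y\<in>Y. {..y})"
    using assms countable_atMost_omega1 by blast
  moreover have "uncountable (UNIV :: 'w set)"
    using assms(1) unfolding is_omega1_def by simp
  ultimately have "(\<Union>y\<in>Y. {..y}) \<noteq> UNIV" by metis
  then obtain b where "b \<notin> (\<Union>y\<in>Y. {..y})" by blast
  then show thesis by (intro that) (auto simp: not_le)
qed

lemma uncountable_image_inflationary_omega1:
  fixes S :: "'w::wellorder set"
  assumes "is_omega1 TYPE('w)" "uncountable S" "\<And>\<xi>. \<xi> \<in> S \<Longrightarrow> \<xi> \<le> f \<xi>"
  shows "uncountable (f ` S)"
proof
  assume "countable (f ` S)"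
  then obtain b where "f ` S \<subseteq> {..<b}" using countable_bounded_omega1[OF assms(1)] by blast
  then have "S \<subseteq> {..<b}" using assms(3) by (auto intro: order.strict_trans1)
  then show False
    using assms(2) countable_lessThan_omega1[OF assms(1)] countable_subset by blast
qed

lemma omega1_closure_point:
  fixes f :: "'w::wellorder \<Rightarrow> 'w"
  assumes "is_omega1 TYPE('w)"
  obtains \<delta> where "is_limit \<delta>" "\<And>\<eta>. \<eta> < \<delta> \<Longrightarrow> f \<eta> < \<delta>"
proof -
  have "\<exists>c. d < c \<and> (\<forall>\<eta>\<le>d. f \<eta> < c)" for d
  proof -
    have "countable (insert d (f ` {..d}))" using countable_atMost_omega1[OF assms] by simp
    then obtain c where "insert d (f ` {..d}) \<subseteq> {..<c}"
      by (rule countable_bounded_omega1[OF assms])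
    then show ?thesis by auto
  qed
  then obtain c where c: "\<And>d. d < c d \<and> (\<forall>\<eta>\<le>d. f \<eta> < c d)" by metis
  define ds where "ds n = (c ^^ n) undefined" for n
  have ds_Suc: "ds n < ds (Suc n)" "\<eta> \<le> ds n \<Longrightarrow> f \<eta> < ds (Suc n)" for n \<eta>
    unfolding ds_def using c by simp_all
  have "countable (range ds)" by simp
  then obtain z where "range ds \<subseteq> {..<z}" by (rule countable_bounded_omega1[OF assms])
  then have bounded: "\<exists>z. \<forall>n. ds n < z" by auto
  define \<delta> where "\<delta> = (LEAST z. \<forall>n. ds n < z)"
  have ub: "ds n < \<delta>" for n unfolding \<delta>_def using LeastI_ex[OF bounded] by blast
  have below: "\<exists>n. \<beta> \<le> ds n" if "\<beta> < \<delta>" for \<beta>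
    using not_less_Least[OF that[unfolded \<delta>_def]] by (auto simp: not_less)
  show thesis
  proof
    show "is_limit \<delta>"
      unfolding is_limit_def
    proof (intro conjI allI impI)
      show "\<exists>\<beta>. \<beta> < \<delta>" using ub by blast
      fix \<beta> assume "\<beta> < \<delta>"
      then obtain n where "\<beta> \<le> ds n" using below by blast
      then show "\<exists>\<gamma>. \<beta> < \<gamma> \<and> \<gamma> < \<delta>"
        using ds_Suc(1)[of n] ub[of "Suc n"] by (blast intro: order.strict_trans1)
    qed
    show "f \<eta> < \<delta>" if "\<eta> < \<delta>" for \<eta>
      using below[OF that] ds_Suc(2) ub by (blast intro: order.strict_trans)
  qed
qed

lemma countable_finite_support:
  assumes "countable C" "countable W"
  shows "countable {t :: 'k \<Rightarrow> 'v. finite {i. t i \<noteq> z} \<and> {i. t i \<noteq> z} \<subseteq> C \<and> range t \<subseteq> W}"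
    (is "countable ?T")
proof -
  define graph where "graph t = (\<lambda>i. (i, t i)) ` {i. t i \<noteq> z}" for t :: "'k \<Rightarrow> 'v"
  have "graph ` ?T \<subseteq> {S. finite S \<and> S \<subseteq> C \<times> W}" unfolding graph_def by auto
  then have "countable (graph ` ?T)"
    by (rule countable_subset) (rule countable_Collect_finite_subset, use assms in auto)
  moreover have "inj_on graph ?T"
  proof (rule inj_onI)
    fix t t' assume "graph t = graph t'"
    then have "t i = t' i" for i unfolding graph_def by (auto simp: set_eq_iff image_iff) metis+
    then show "t = t'" by auto
  qed
  ultimately show ?thesis by (rule countable_image_inj_on)
qed

lemma countable_Fn: "countable Fn"
proof -
  have "Fn = {t :: nat \<rightharpoonup> bool. finite {i. t i \<noteq> None} \<and> {i. t i \<noteq> None} \<subseteq> UNIV \<and> range t \<subseteq> UNIV}"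
    unfolding Fn_def dom_def by simp
  then show ?thesis
    using countable_finite_support[of "UNIV :: nat set" "UNIV :: bool option set" None] by simp
qed

lemma reflp_pleq: "reflp pleq"
  unfolding pleq_def by (simp add: reflpI)

lemma pleq_trans:
  assumes "pleq r q" "pleq q s"
  shows "pleq r s"
proof -
  have "{i. r i \<noteq> s i \<and> s i \<noteq> Map.empty} \<subseteq>
      {i. r i \<noteq> q i \<and> q i \<noteq> Map.empty} \<union> {i. q i \<noteq> s i \<and> s i \<noteq> Map.empty}"
    by auto
  with assms show ?thesis unfolding pleq_def by (meson finite_Un finite_subset map_le_trans)
qed

lemma transp_pleq: "transp pleq"
  by (rule transpI) (rule pleq_trans)

lemma pleq_if_agree_on_supp:
  assumes "\<And>i. q i = Map.empty \<or> r i = q i"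
  shows "pleq r q"
proof -
  have "{i. r i \<noteq> q i \<and> q i \<noteq> Map.empty} = {}" using assms by blast
  moreover have "q i \<subseteq>\<^sub>m r i" for i using assms[of i] by auto
  ultimately show ?thesis unfolding pleq_def by (metis finite.emptyI)
qed

lemma forces_mem_if_below_member:
  assumes "reflp le" "transp le" "le q a" "a \<in> A"
  shows "forces_mem P le q A"
proof (unfold forces_mem_def, intro ballI impI)
  fix r assume "r \<in> P" "le r q"
  have "le r a" using transpD[OF assms(2) \<open>le r q\<close> assms(3)] .
  then show "\<exists>s\<in>P. le s r \<and> (\<exists>a\<in>A. le s a)"
    using \<open>r \<in> P\<close> reflpD[OF assms(1)] assms(4) by blast
qed

lemma Least_less:
  fixes \<xi> :: "'a::wellorder"
  assumes "\<eta> < \<xi>" "P \<eta>"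
  shows "(LEAST \<zeta>. P \<zeta>) < \<xi>"
  using Least_le[of P, OF assms(2)] assms(1) by (rule order.strict_trans1)

lemma Least_cong_below:
  fixes \<xi> :: "'a::wellorder"
  assumes "\<exists>\<eta><\<xi>. P \<eta>" "\<And>\<eta>. \<eta> < \<xi> \<Longrightarrow> P \<eta> \<longleftrightarrow> Q \<eta>"
  shows "(LEAST \<eta>. P \<eta>) = (LEAST \<eta>. Q \<eta>)"
proof -
  obtain \<eta>\<^sub>0 where "\<eta>\<^sub>0 < \<xi>" "P \<eta>\<^sub>0" using assms(1) by blast
  then have less: "(LEAST \<eta>. P \<eta>) < \<xi>" and P_Least: "P (LEAST \<eta>. P \<eta>)"
    by (simp_all add: Least_less LeastI)
  have "(LEAST \<eta>. Q \<eta>) = (LEAST \<eta>. P \<eta>)"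
  proof (rule Least_equality)
    show "Q (LEAST \<eta>. P \<eta>)" using assms(2)[OF less] P_Least by blast
    show "(LEAST \<eta>. P \<eta>) \<le> \<zeta>" if "Q \<zeta>" for \<zeta>
    proof (rule ccontr)
      assume "\<not> (LEAST \<eta>. P \<eta>) \<le> \<zeta>"
      then have "\<zeta> < (LEAST \<eta>. P \<eta>)" by simp
      then have "\<not> P \<zeta>" by (rule not_less_Least)
      moreover have "\<zeta> < \<xi>" using \<open>\<zeta> < (LEAST \<eta>. P \<eta>)\<close> less by (rule order.strict_trans)
      ultimately show False using assms(2) that by blast
    qed
  qed
  then show ?thesis by simp
qed

definition amalgam ::
    "('k \<Rightarrow> 'a \<rightharpoonup> 'b) \<Rightarrow> ('w::wellorder \<Rightarrow> 'k \<Rightarrow> 'a \<rightharpoonup> 'b) \<Rightarrow> 'w \<Rightarrow> 'k \<Rightarrow> 'a \<rightharpoonup> 'b" where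
  "amalgam p g \<xi> i =
     (if p i \<noteq> Map.empty then p i
      else if \<exists>\<eta><\<xi>. g \<eta> i \<noteq> Map.empty then g (LEAST \<eta>. g \<eta> i \<noteq> Map.empty) i
      else Map.empty)"

lemma amalgam_cong:
  assumes "\<And>\<eta>. \<eta> < \<xi> \<Longrightarrow> g \<eta> = h \<eta>"
  shows "amalgam p g \<xi> = amalgam p h \<xi>"
proof
  fix i
  have witness_iff: "(\<exists>\<eta><\<xi>. g \<eta> i \<noteq> Map.empty) \<longleftrightarrow> (\<exists>\<eta><\<xi>. h \<eta> i \<noteq> Map.empty)"
    using assms by auto
  show "amalgam p g \<xi> i = amalgam p h \<xi> i"
  proof (cases "\<exists>\<eta><\<xi>. g \<eta> i \<noteq> Map.empty")
    case True
    then obtain \<eta> where "\<eta> < \<xi>" "g \<eta> i \<noteq> Map.empty" by blast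
    then have "(LEAST \<eta>. g \<eta> i \<noteq> Map.empty) < \<xi>" by (rule Least_less)
    moreover have "(LEAST \<eta>. g \<eta> i \<noteq> Map.empty) = (LEAST \<eta>. h \<eta> i \<noteq> Map.empty)"
      using True by (rule Least_cong_below) (simp add: assms)
    ultimately show ?thesis
      unfolding amalgam_def using True witness_iff assms by simp
  next
    case False
    moreover have "\<not> (\<exists>\<eta><\<xi>. h \<eta> i \<noteq> Map.empty)" using False witness_iff by blast
    ultimately show ?thesis unfolding amalgam_def by (simp only: if_False)
  qed
qed

lemma amalgam_cases:
  "amalgam p g \<xi> i = Map.empty \<or> amalgam p g \<xi> i = p i \<or> (\<exists>\<eta><\<xi>. amalgam p g \<xi> i = g \<eta> i)"
proof (cases "p i = Map.empty \<and> (\<exists>\<eta><\<xi>. g \<eta> i \<noteq> Map.empty)")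
  case True
  then obtain \<eta> where "\<eta> < \<xi>" "g \<eta> i \<noteq> Map.empty" by blast
  then have "(LEAST \<eta>. g \<eta> i \<noteq> Map.empty) < \<xi>" by (rule Least_less)
  with True show ?thesis unfolding amalgam_def by auto
next
  case False
  then show ?thesis unfolding amalgam_def by auto
qed

lemma amalgam_le: "pleq (amalgam p g \<xi>) p"
  by (rule pleq_if_agree_on_supp) (simp add: amalgam_def)

lemma amalgam_in_PiStar:
  assumes "p \<in> PiStar K" "countable {..<\<xi>}" "\<And>\<eta>. \<eta> < \<xi> \<Longrightarrow> g \<eta> \<in> PiStar K"
  shows "amalgam p g \<xi> \<in> PiStar K"
proof -
  have "supp (amalgam p g \<xi>) \<subseteq> supp p \<union> (\<Union>\<eta>\<in>{..<\<xi>}. supp (g \<eta>))"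
  proof
    fix i assume "i \<in> supp (amalgam p g \<xi>)"
    then show "i \<in> supp p \<union> (\<Union>\<eta>\<in>{..<\<xi>}. supp (g \<eta>))"
      using amalgam_cases[of p g \<xi> i] by auto
  qed
  moreover have "countable (supp p \<union> (\<Union>\<eta>\<in>{..<\<xi>}. supp (g \<eta>)))"
  proof (intro countable_Un countable_UN[OF assms(2)])
    show "countable (supp p)" using assms(1) unfolding PiStar_def by blast
    show "countable (supp (g \<eta>))" if "\<eta> \<in> {..<\<xi>}" for \<eta>
      using assms(3) that unfolding PiStar_def by blast
  qed
  ultimately have "countable (supp (amalgam p g \<xi>))" by (rule countable_subset)
  moreover have "amalgam p g \<xi> i \<in> Fn \<and> (i \<notin> K \<longrightarrow> amalgam p g \<xi> i = Map.empty)" for i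
    using amalgam_cases[of p g \<xi> i] assms(1,3) unfolding PiStar_def Fn_def by auto
  ultimately show ?thesis unfolding PiStar_def by blast
qed

lemma amalgam_mono:
  assumes "\<eta> \<le> \<xi>" "amalgam p g \<eta> i \<noteq> Map.empty"
  shows "amalgam p g \<xi> i = amalgam p g \<eta> i"
  using assms unfolding amalgam_def by (auto intro: order.strict_trans2 split: if_splits)

lemma amalgam_first_support:
  assumes "g \<xi> i \<noteq> Map.empty" "amalgam p g \<xi> i = Map.empty" "\<xi> < \<delta>"
  shows "amalgam p g \<delta> i = g \<xi> i"
proof -
  have "p i = Map.empty" using assms(2) unfolding amalgam_def by (auto split: if_splits)
  moreover have "g \<eta> i = Map.empty" if "\<eta> < \<xi>" for \<eta>
    using that assms(2) LeastI[of "\<lambda>\<eta>. g \<eta> i \<noteq> Map.empty"] unfolding amalgam_def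
    by (auto split: if_splits)
  then have "(LEAST \<eta>. g \<eta> i \<noteq> Map.empty) = \<xi>"
    using assms(1) by (intro Least_equality) (auto simp: not_less[symmetric])
  ultimately show ?thesis using assms unfolding amalgam_def by auto
qed

lemma amalgam_supp_below_limit:
  assumes "is_limit \<delta>" "amalgam p g \<delta> i \<noteq> Map.empty"
  obtains \<eta> where "\<eta> < \<delta>" "amalgam p g \<eta> i \<noteq> Map.empty"
proof (cases "p i = Map.empty")
  case False
  obtain \<eta> where "\<eta> < \<delta>" using assms(1) unfolding is_limit_def by blast
  with False show thesis by (intro that) (auto simp: amalgam_def)
next
  case True
  then obtain \<zeta> where \<zeta>: "\<zeta> < \<delta>" "g \<zeta> i \<noteq> Map.empty"
    using assms(2) unfolding amalgam_def by (auto split: if_splits)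
  then obtain \<eta> where "\<zeta> < \<eta>" "\<eta> < \<delta>" using assms(1) unfolding is_limit_def by blast
  moreover have "g (LEAST \<eta>. g \<eta> i \<noteq> Map.empty) i \<noteq> Map.empty"
    using \<zeta>(2) by (rule LeastI)
  ultimately show thesis using \<zeta> True by (intro that) (auto simp: amalgam_def)
qed

lemma finite_subset_supp_amalgam_below_limit:
  assumes "is_limit \<delta>" "finite F" "F \<subseteq> supp (amalgam p g \<delta>)"
  obtains \<eta> where "\<eta> < \<delta>" "F \<subseteq> supp (amalgam p g \<eta>)"
proof -
  from assms(2,3) have "\<exists>\<eta><\<delta>. F \<subseteq> supp (amalgam p g \<eta>)"
  proof (induction F rule: finite_induct)
    case empty
    then show ?case using assms(1) unfolding is_limit_def by blast
  next
    case (insert i F)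
    then obtain \<eta>\<^sub>1 where \<eta>\<^sub>1: "\<eta>\<^sub>1 < \<delta>" "F \<subseteq> supp (amalgam p g \<eta>\<^sub>1)" by auto
    have "amalgam p g \<delta> i \<noteq> Map.empty" using insert.prems by simp
    then obtain \<eta>\<^sub>2 where \<eta>\<^sub>2: "\<eta>\<^sub>2 < \<delta>" "amalgam p g \<eta>\<^sub>2 i \<noteq> Map.empty"
      by (rule amalgam_supp_below_limit[OF assms(1)])
    have "amalgam p g (max \<eta>\<^sub>1 \<eta>\<^sub>2) j \<noteq> Map.empty" if "j \<in> insert i F" for j
    proof (cases "j = i")
      case True
      then show ?thesis using \<eta>\<^sub>2(2) amalgam_mono[of \<eta>\<^sub>2 "max \<eta>\<^sub>1 \<eta>\<^sub>2" p g i] by simp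
    next
      case False
      then show ?thesis using that \<eta>\<^sub>1(2) amalgam_mono[of \<eta>\<^sub>1 "max \<eta>\<^sub>1 \<eta>\<^sub>2" p g j] by auto
    qed
    then have "insert i F \<subseteq> supp (amalgam p g (max \<eta>\<^sub>1 \<eta>\<^sub>2))" by blast
    then show ?case using \<eta>\<^sub>1 \<eta>\<^sub>2 by (intro exI[of _ "max \<eta>\<^sub>1 \<eta>\<^sub>2"]) auto
  qed
  then show thesis using that by blast
qed

definition strengthening :: "('k \<Rightarrow> 'a \<rightharpoonup> 'b) \<Rightarrow> ('k \<Rightarrow> 'a \<rightharpoonup> 'b) \<Rightarrow> 'k \<Rightarrow> 'a \<rightharpoonup> 'b" where
  "strengthening r q i = (if q i \<noteq> Map.empty \<and> r i \<noteq> q i then r i else Map.empty)"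

lemma supp_strengthening: "supp (strengthening r q) \<subseteq> supp q"
  unfolding strengthening_def by auto

lemma finite_supp_strengthening:
  assumes "pleq r q"
  shows "finite (supp (strengthening r q))"
proof (rule finite_subset)
  show "supp (strengthening r q) \<subseteq> {i. r i \<noteq> q i \<and> q i \<noteq> Map.empty}"
    unfolding strengthening_def by auto
  show "finite {i. r i \<noteq> q i \<and> q i \<noteq> Map.empty}" using assms unfolding pleq_def by blast
qed

lemma strengthening_in_Fn: "r \<in> PiStar K \<Longrightarrow> strengthening r q i \<in> Fn"
  unfolding PiStar_def strengthening_def Fn_def by auto

lemma override_on_in_PiStar:
  assumes "q \<in> PiStar K" "supp \<tau> \<subseteq> supp q" "\<And>i. \<tau> i \<in> Fn"
  shows "override_on q \<tau> (supp \<tau>) \<in> PiStar K"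
proof -
  have "supp (override_on q \<tau> (supp \<tau>)) \<subseteq> supp q"
    using assms(2) by (auto simp: override_on_def)
  then have "countable (supp (override_on q \<tau> (supp \<tau>)))"
    using assms(1) countable_subset unfolding PiStar_def by blast
  with assms show ?thesis unfolding PiStar_def override_on_def by auto
qed

locale unbounded_name =
  fixes K :: "'k set" and p :: "'k \<Rightarrow> nat \<rightharpoonup> bool"
    and A :: "'w::wellorder \<Rightarrow> ('k \<Rightarrow> nat \<rightharpoonup> bool) set"
  assumes omega1: "is_omega1 TYPE('w)"
    and p_in_PiStar: "p \<in> PiStar K"
    and unbounded: "forces_unbounded (PiStar K) pleq p A"
begin

definition extension :: "('w \<Rightarrow> 'k \<Rightarrow> nat \<rightharpoonup> bool) \<Rightarrow> 'w \<Rightarrow> 'k \<Rightarrow> nat \<rightharpoonup> bool" where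
  "extension g \<xi> =
     (SOME r. r \<in> PiStar K \<and> pleq r (amalgam p g \<xi>) \<and> (\<exists>\<alpha>>\<xi>. \<exists>a\<in>A \<alpha>. pleq r a))"

definition stage :: "'w \<Rightarrow> 'k \<Rightarrow> nat \<rightharpoonup> bool" where
  "stage = wfrec {(\<eta>, \<xi>). \<eta> < \<xi>} extension"

abbreviation base :: "'w \<Rightarrow> 'k \<Rightarrow> nat \<rightharpoonup> bool" where
  "base \<xi> \<equiv> amalgam p stage \<xi>"

abbreviation stem :: "'w \<Rightarrow> 'k \<Rightarrow> nat \<rightharpoonup> bool" where
  "stem \<xi> \<equiv> strengthening (stage \<xi>) (base \<xi>)"

lemma stage_unfold: "stage \<xi> = extension stage \<xi>"
proof -
  have "amalgam p (cut stage {(\<eta>, \<xi>). \<eta> < \<xi>} \<xi>) \<xi> = base \<xi>"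
    by (rule amalgam_cong) (simp add: cut_def)
  then have "extension (cut stage {(\<eta>, \<xi>). \<eta> < \<xi>} \<xi>) \<xi> = extension stage \<xi>"
    unfolding extension_def by simp
  moreover have "stage \<xi> = extension (cut stage {(\<eta>, \<xi>). \<eta> < \<xi>} \<xi>) \<xi>"
    unfolding stage_def by (rule wfrec[OF wf])
  ultimately show ?thesis by simp
qed

lemma stage_properties:
  "stage \<xi> \<in> PiStar K \<and> pleq (stage \<xi>) (base \<xi>) \<and> (\<exists>\<alpha>>\<xi>. \<exists>a\<in>A \<alpha>. pleq (stage \<xi>) a)"
proof (induction \<xi> rule: less_induct)
  case (less \<xi>)
  then have "base \<xi> \<in> PiStar K"
    using p_in_PiStar countable_lessThan_omega1[OF omega1] by (blast intro: amalgam_in_PiStar)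
  then have "\<exists>r. r \<in> PiStar K \<and> pleq r (base \<xi>) \<and> (\<exists>\<alpha>>\<xi>. \<exists>a\<in>A \<alpha>. pleq r a)"
    using unbounded amalgam_le unfolding forces_unbounded_def by blast
  then show ?case unfolding stage_unfold[of \<xi>] extension_def by (rule someI_ex)
qed

lemma stage_in_PiStar: "stage \<xi> \<in> PiStar K"
  using stage_properties by blast

lemma stage_le_base: "pleq (stage \<xi>) (base \<xi>)"
  using stage_properties by blast

lemma stage_forces_above: "\<exists>\<alpha>>\<xi>. \<exists>a\<in>A \<alpha>. pleq (stage \<xi>) a"
  using stage_properties by blast

lemma base_in_PiStar: "base \<xi> \<in> PiStar K"
  using p_in_PiStar countable_lessThan_omega1[OF omega1] stage_in_PiStar by (rule amalgam_in_PiStar)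

lemma supp_stem_subset:
  assumes "\<xi> \<le> \<gamma>"
  shows "supp (stem \<xi>) \<subseteq> supp (base \<gamma>)"
  using supp_strengthening amalgam_mono[OF assms] by fastforce

lemma override_stem_in_PiStar:
  assumes "\<xi> \<le> \<gamma>"
  shows "override_on (base \<gamma>) (stem \<xi>) (supp (stem \<xi>)) \<in> PiStar K"
  using base_in_PiStar supp_stem_subset[OF assms] strengthening_in_Fn[OF stage_in_PiStar]
  by (rule override_on_in_PiStar)

lemma exists_uncountable_stem_class: "\<exists>\<tau>. uncountable {\<xi>. stem \<xi> = \<tau>}"
proof (rule ccontr)
  assume "\<nexists>\<tau>. uncountable {\<xi>. stem \<xi> = \<tau>}"
  then have fibres: "countable {\<xi>. stem \<xi> = \<tau>}" for \<tau> by blast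
  define B where "B \<eta> = {\<xi>. supp (stem \<xi>) \<subseteq> supp (base \<eta>)}" for \<eta>
  have "\<exists>b. B \<eta> \<subseteq> {..<b}" for \<eta>
  proof -
    let ?T = "{\<tau> :: 'k \<Rightarrow> nat \<rightharpoonup> bool. finite (supp \<tau>) \<and> supp \<tau> \<subseteq> supp (base \<eta>) \<and> range \<tau> \<subseteq> Fn}"
    have "countable (supp (base \<eta>))" using base_in_PiStar unfolding PiStar_def by blast
    then have "countable ?T" using countable_Fn by (rule countable_finite_support)
    moreover have "B \<eta> \<subseteq> (\<Union>\<tau>\<in>?T. {\<xi>. stem \<xi> = \<tau>})"
      unfolding B_def
      using finite_supp_strengthening[OF stage_le_base] strengthening_in_Fn[OF stage_in_PiStar]
      by blast
    ultimately have "countable (B \<eta>)" using fibres by (meson countable_UN countable_subset)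
    then show ?thesis by (rule countable_bounded_omega1[OF omega1]) blast
  qed
  then obtain b where b: "\<And>\<eta>. B \<eta> \<subseteq> {..<b \<eta>}" by metis
  obtain \<delta> where \<delta>: "is_limit \<delta>" "\<And>\<eta>. \<eta> < \<delta> \<Longrightarrow> b \<eta> < \<delta>"
    using omega1_closure_point[OF omega1] by blast
  obtain \<eta> where "\<eta> < \<delta>" "supp (stem \<delta>) \<subseteq> supp (base \<eta>)"
    using \<delta>(1) finite_supp_strengthening[OF stage_le_base] supp_strengthening
    by (rule finite_subset_supp_amalgam_below_limit)
  then have "\<delta> < b \<eta>" using b unfolding B_def by blast
  with \<delta>(2)[OF \<open>\<eta> < \<delta>\<close>] show False by simp
qed

lemma override_stem_le_stage:
  assumes "\<xi> < \<gamma>"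
  shows "pleq (override_on (base \<gamma>) (stem \<xi>) (supp (stem \<xi>))) (stage \<xi>)"
proof (rule pleq_if_agree_on_supp)
  fix i
  show "stage \<xi> i = Map.empty \<or> override_on (base \<gamma>) (stem \<xi>) (supp (stem \<xi>)) i = stage \<xi> i"
  proof (cases "stem \<xi> i = Map.empty")
    case False
    then show ?thesis by (simp add: strengthening_def split: if_splits)
  next
    case no_stem: True
    have "base \<gamma> i = stage \<xi> i" if "stage \<xi> i \<noteq> Map.empty"
    proof (cases "base \<xi> i = Map.empty")
      case True
      then show ?thesis using amalgam_first_support[OF that True assms] by simp
    next
      case False
      with no_stem that have "stage \<xi> i = base \<xi> i" by (simp add: strengthening_def split: if_splits)
      with False show ?thesis using amalgam_mono[of \<xi> \<gamma> p stage i] assms by simp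
    qed
    with no_stem show ?thesis by auto
  qed
qed

lemma clubsuit_guess_below:
  assumes "clubsuit_seq E x"
  shows "\<exists>q\<in>PiStar K. pleq q p \<and> (\<exists>\<gamma>\<in>E. \<forall>n\<in>x \<gamma>. forces_mem (PiStar K) pleq q (A n))"
proof -
  obtain \<tau> where "uncountable {\<xi>. stem \<xi> = \<tau>}"
    using exists_uncountable_stem_class by blast
  obtain \<alpha> a where \<alpha>: "\<And>\<xi>. \<xi> < \<alpha> \<xi>" "\<And>\<xi>. a \<xi> \<in> A (\<alpha> \<xi>)" "\<And>\<xi>. pleq (stage \<xi>) (a \<xi>)"
    using stage_forces_above by metis
  have "uncountable (\<alpha> ` {\<xi>. stem \<xi> = \<tau>})"
    using omega1 \<open>uncountable {\<xi>. stem \<xi> = \<tau>}\<close>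
    by (rule uncountable_image_inflationary_omega1) (simp add: \<alpha>(1) less_imp_le)
  then obtain \<gamma> where "\<gamma> \<in> E" and guessed: "x \<gamma> \<subseteq> \<alpha> ` {\<xi>. stem \<xi> = \<tau>}"
    using assms unfolding clubsuit_seq_def by blast
  have ladder: "x \<gamma> \<subseteq> {..<\<gamma>}" "infinite (x \<gamma>)"
    using assms \<open>\<gamma> \<in> E\<close> unfolding clubsuit_seq_def ladder_def by blast+
  define q where "q = override_on (base \<gamma>) \<tau> (supp \<tau>)"
  have guessed_stage: "\<xi> < \<gamma> \<and> pleq q (stage \<xi>) \<and> pleq q (a \<xi>) \<and> a \<xi> \<in> A n"
    if "n \<in> x \<gamma>" "n = \<alpha> \<xi>" "stem \<xi> = \<tau>" for n \<xi>
  proof -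
    have "\<xi> < \<gamma>" using \<alpha>(1)[of \<xi>] ladder(1) that by auto
    then have "pleq q (stage \<xi>)" unfolding q_def using override_stem_le_stage that(3) by blast
    then show ?thesis using \<open>\<xi> < \<gamma>\<close> pleq_trans \<alpha>(2,3) that(2) by blast
  qed
  have "x \<gamma> \<noteq> {}" using ladder(2) by auto
  then obtain \<xi> where "\<alpha> \<xi> \<in> x \<gamma>" "stem \<xi> = \<tau>" using guessed by blast
  with guessed_stage have "\<xi> < \<gamma>" "pleq q (stage \<xi>)" by blast+
  have "q \<in> PiStar K"
    using override_stem_in_PiStar[OF less_imp_le[OF \<open>\<xi> < \<gamma>\<close>]] \<open>stem \<xi> = \<tau>\<close>
    unfolding q_def by simp
  moreover have "pleq q p"
    using \<open>pleq q (stage \<xi>)\<close> stage_le_base amalgam_le by (blast intro: pleq_trans)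
  moreover have "forces_mem (PiStar K) pleq q (A n)" if n: "n \<in> x \<gamma>" for n
  proof -
    obtain \<zeta> where "n = \<alpha> \<zeta>" "stem \<zeta> = \<tau>" using n guessed by blast
    then have "pleq q (a \<zeta>)" "a \<zeta> \<in> A n" using guessed_stage n by blast+
    then show ?thesis by (rule forces_mem_if_below_member[OF reflp_pleq transp_pleq])
  qed
  ultimately show ?thesis using \<open>\<gamma> \<in> E\<close> by blast
qed

end

theorem lemma3p7:
  fixes E :: "'w::wellorder set" and x :: "'w \<Rightarrow> 'w set" and K :: "'k set"
  assumes "is_omega1 TYPE('w)"
    and "\<forall>\<gamma>\<in>E. is_limit \<gamma>"
    and "stationary E"
    and "clubsuit_seq E x"
  shows "forces_clubsuit_guess (PiStar K) pleq E x"
  unfolding forces_clubsuit_guess_def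
proof (intro ballI allI impI)
  fix p A
  assume "p \<in> PiStar K" and "(\<forall>\<alpha>. A \<alpha> \<subseteq> PiStar K) \<and> forces_unbounded (PiStar K) pleq p (A :: 'w \<Rightarrow> _)"
  then interpret unbounded_name K p A
    using assms(1) by unfold_locales auto
  show "\<exists>q\<in>PiStar K. pleq q p \<and> (\<exists>\<gamma>\<in>E. \<forall>n\<in>x \<gamma>. forces_mem (PiStar K) pleq q (A n))"
    using assms(4) by (rule clubsuit_guess_below)
qed

end
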